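(* Let $q>2$, $n\ge 2$, $u\in\mathcal C$ and $\Lambda\ge1$ with $\frac1\Lambda\le|u'(x)|\le\Lambda$ for all $x\in\mathbb{R}/\mathbb{Z}$. Then \[\big|\mathrm{TP}_{\mathrm{cl}}(u)-\mathrm{TP}(u)\big|\le(\mathrm{bil}\,u)^{2q}\Lambda^{2q}[u']_{W^{1-1/q,q}}^q(\Lambda-1).\]
   Context: $\mathcal C=\{u\in W^{2-1/q,q}(\mathbb{R}/\mathbb{Z},\mathbb{R}^n): u\text{ injective and }\min|u'|>0\}$. \[\mathrm{TP}(u)=\frac1q\iint_{\mathbb{R}/\mathbb{Z}\times\mathbb{R}/\mathbb{Z}}\frac{|u'(y)\wedge(u(x)-u(y))|^q}{|u(x)-u(y)|^{2q}}\,dx\,dy,\] with $|a\wedge b|$ defined via $\langle a\wedge b,c\wedge d\rangle=\langle a,c\rangle\langle b,d\rangle-\langle a,d\rangle\langle b,c\rangle$; the classical tangent-point functional is \[\mathrm{TP}_{\mathrm{cl}}(u)=\frac1q\iint_{\mathbb{R}/\mathbb{Z}\times\mathbb{R}/\mathbb{Z}}\frac{|P^\perp_{u'(y)}(u(x)-u(y))|^q}{|u(x)-u(y)|^{2q}}|u'(x)||u'(y)|\,dx\,dy,\] where $P^\perp_{u'(y)}$ is the orthogonal projection onto the orthogonal complement of $\mathbb{R}u'(y)$. $\mathrm{bil}(u)=\sup_{x\ne y}\frac{|x-y|}{|u(x)-u(y)|}$ with $|x-y|$ the distance in $\mathbb{R}/\mathbb{Z}$. $[f]_{W^{s,q}}=\big(\iint\frac{|f(x)-f(y)|^q}{|x-y|^{1+sq}}dx\,dy\big)^{1/q}$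 for $s\in(0,1)$. *)

theory Defs
  imports "HOL-Analysis.Analysis"
begin

text \<open>Curves on the circle R/Z are represented as 1-periodic maps real => real^'n.
  The derivative is the vector derivative.\<close>

definition circ_dist :: "real \<Rightarrow> real \<Rightarrow> real" where
  "circ_dist x y = \<bar>(x - y) - of_int (round (x - y))\<bar>"

definition dcurve :: "(real \<Rightarrow> real ^ 'n) \<Rightarrow> real \<Rightarrow> real ^ 'n" where
  "dcurve u x = vector_derivative u (at x)"

definition gag_integrand :: "(real \<Rightarrow> real ^ 'n) \<Rightarrow> real \<Rightarrow> real \<Rightarrow> real \<times> real \<Rightarrow> real" where
  "gag_integrand f s q z = norm (f (fst z) - f (snd z)) powr q / circ_dist (fst z) (snd z) powr (1 + s * q)"

definition gag_seminorm :: "(real \<Rightarrow> real ^ 'n) \<Rightarrow> real \<Rightarrow> real \<Rightarrow> real" where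
  "gag_seminorm f s q = (LINT z : {0..1} \<times> {0..1} | lborel. gag_integrand f s q z) powr (1 / q)"

text \<open>Membership in W^{2-1/q,q}(R/Z,R^n) (q > 2): a 1-periodic C^1 curve whose derivative has
  finite W^{1-1/q,q} Gagliardo seminorm (for q > 2 every element has a C^1 representative).\<close>
definition W2q :: "real \<Rightarrow> (real \<Rightarrow> real ^ 'n) \<Rightarrow> bool" where
  "W2q q u \<longleftrightarrow> (\<forall>x. u (x + 1) = u x) \<and> u C1_differentiable_on UNIV \<and>
     set_integrable lborel ({0..1} \<times> {0..1}) (gag_integrand (dcurve u) (1 - 1 / q) q)"

definition admissible :: "real \<Rightarrow> (real \<Rightarrow> real ^ 'n) \<Rightarrow> bool" where
  "admissible q u \<longleftrightarrow> W2q q u \<and> inj_on u {0..<1} \<and> (\<exists>c>0. \<forall>x. norm (dcurve u x) \<ge> c)"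

text \<open>|a \<and> b|, from <a\<and>b,c\<and>d> = <a,c><b,d> - <a,d><b,c>.\<close>
definition wedge_norm :: "real ^ 'n \<Rightarrow> real ^ 'n \<Rightarrow> real" where
  "wedge_norm a b = sqrt ((a \<bullet> a) * (b \<bullet> b) - (a \<bullet> b) * (b \<bullet> a))"

definition proj_perp :: "real ^ 'n \<Rightarrow> real ^ 'n \<Rightarrow> real ^ 'n" where
  "proj_perp v w = w - ((w \<bullet> v) / (v \<bullet> v)) *\<^sub>R v"

definition TP :: "real \<Rightarrow> (real \<Rightarrow> real ^ 'n) \<Rightarrow> real" where
  "TP q u = (1 / q) * (LINT z : {0..1} \<times> {0..1} | lborel.
     (let x = fst z; y = snd z in
       wedge_norm (dcurve u y) (u x - u y) powr q / norm (u x - u y) powr (2 * q)))"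

definition TP_cl :: "real \<Rightarrow> (real \<Rightarrow> real ^ 'n) \<Rightarrow> real" where
  "TP_cl q u = (1 / q) * (LINT z : {0..1} \<times> {0..1} | lborel.
     (let x = fst z; y = snd z in
       norm (proj_perp (dcurve u y) (u x - u y)) powr q / norm (u x - u y) powr (2 * q)
         * norm (dcurve u x) * norm (dcurve u y)))"

definition bil :: "(real \<Rightarrow> real ^ 'n) \<Rightarrow> real" where
  "bil u = (SUP z \<in> {(x, y). x \<in> {0..<1} \<and> y \<in> {0..<1} \<and> x \<noteq> y}.
              circ_dist (fst z) (snd z) / norm (u (fst z) - u (snd z)))"

end

theory Submission
  imports Defs
begin

text \<open>Let \<open>P\<^sub>y\<close> be the projection onto the orthogonal complement of \<open>u'(y)\<close>. Since
  \<open>|a \<and> b| = |a| |P b|\<close> for the projection \<open>P\<close> orthogonal to \<open>a\<close>, both functionals integrate the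
  same kernel \<open>G(x,y) = |P\<^sub>y (u(x) - u(y))|^q / |u(x) - u(y)|^(2q)\<close>, once against the weight
  \<open>|u'(x)| |u'(y)|\<close> and once against \<open>|u'(y)|^q\<close>; for \<open>q \<ge> 2\<close> these weights differ by at most
  \<open>q^2 \<Lambda>^(2q) (\<Lambda> - 1)\<close>. It remains to show \<open>\<integral>\<integral> G \<le> bil(u)^(2q) [u']^q / q\<close>.
  Write \<open>u(x) - u(y) = \<delta> \<integral>\<^sub>0\<^sup>1 u'(y + t \<delta>) dt\<close>, where \<open>\<delta> \<in> [-1/2, 1/2)\<close> represents \<open>x - y\<close>
  modulo 1. As \<open>P\<^sub>y\<close> annihilates \<open>u'(y)\<close>, Jensen's inequality and \<open>|u(x) - u(y)| \<ge> |\<delta>| / bil(u)\<close>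
  give \<open>G(x,y) \<le> bil(u)^(2q) \<integral>\<^sub>0\<^sup>1 |u'(y + t \<delta>) - u'(y)|^q / |\<delta>|^q dt\<close>. Integrating over \<open>x\<close>
  and substituting \<open>r = t \<delta>\<close> splits off the factor \<open>\<integral>\<^sub>0\<^sup>1 t^(q-1) dt = 1/q\<close>, and what remains is
  the Gagliardo integral of \<open>u'\<close>, because \<open>1 + (1 - 1/q) q = q\<close>.\<close>

section \<open>Distance on the circle and periodic functions\<close>

definition circ_diff :: "real \<Rightarrow> real \<Rightarrow> real" where
  "circ_diff x y = x - y - of_int (round (x - y))"

lemma abs_circ_diff: "\<bar>circ_diff x y\<bar> = circ_dist x y"
  unfolding circ_diff_def circ_dist_def ..

lemma round_add_of_int: "round (t + of_int k :: real) = round t + k"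
  unfolding round_def by (metis add.commute add.left_commute floor_add_int)

lemma circ_diff_add_of_int:
  "circ_diff (x + of_int k) y = circ_diff x y"
  "circ_diff x (y + of_int k) = circ_diff x y"
proof -
  have "round (x + of_int k - y) = round (x - y) + k" "round (x - (y + of_int k)) = round (x - y) - k"
    using round_add_of_int[of "x - y" k] round_add_of_int[of "x - y" "- k"]
    by (simp_all add: algebra_simps)
  then show "circ_diff (x + of_int k) y = circ_diff x y" "circ_diff x (y + of_int k) = circ_diff x y"
    unfolding circ_diff_def by simp_all
qed

lemma circ_dist_add_of_int:
  "circ_dist (x + of_int k) y = circ_dist x y"
  "circ_dist x (y + of_int k) = circ_dist x y"
  by (simp_all only: abs_circ_diff[symmetric] circ_diff_add_of_int)

lemma circ_dist_frac: "circ_dist (frac x) (frac y) = circ_dist x y"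
  using circ_dist_add_of_int(1)[of x "- \<lfloor>x\<rfloor>" "frac y"] circ_dist_add_of_int(2)[of x y "- \<lfloor>y\<rfloor>"]
  by (simp add: frac_def)

lemma circ_diff_self_add: "h \<in> {-1/2..<1/2} \<Longrightarrow> circ_diff (y + h) y = h"
  unfolding circ_diff_def round_def by (simp add: floor_eq_iff)

lemma circ_dist_nonneg: "circ_dist x y \<ge> 0"
  unfolding circ_dist_def by simp

lemma circ_dist_le: "circ_dist x y \<le> \<bar>x - y - of_int k\<bar>"
  unfolding circ_dist_def using round_diff_minimal[of "x - y" k] by simp

lemma circ_dist_le_half: "circ_dist x y \<le> 1/2"
  unfolding circ_dist_def using of_int_round_abs_le[of "x - y"] by linarith

lemma periodic_add_of_int:
  assumes "\<And>x. f (x + 1) = f x"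
  shows "f (x + of_int k) = f x"
proof -
  have nat: "f (x + of_nat n) = f x" for x n
  proof (induction n)
    case (Suc n)
    have "f (x + of_nat (Suc n)) = f (x + of_nat n + 1)" by (simp add: algebra_simps)
    then show ?case using Suc assms by simp
  qed simp
  show ?thesis
  proof (cases "k \<ge> 0")
    case True
    then show ?thesis using nat[of x "nat k"] by simp
  next
    case False
    then show ?thesis using nat[of "x + of_int k" "nat (- k)"] by simp
  qed
qed

lemma periodic_frac:
  assumes "\<And>x. f (x + 1) = f x"
  shows "f (frac x) = f x"
  using periodic_add_of_int[of f "frac x" "\<lfloor>x\<rfloor>", OF assms] by (simp add: frac_def)

lemma periodic_circ_diff:
  assumes "\<And>x. f (x + 1) = f x"
  shows "f (y + circ_diff x y) = f x"
  using periodic_add_of_int[of f "y + circ_diff x y" "round (x - y)", OF assms]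
  by (simp add: circ_diff_def)

section \<open>Orthogonal projections and the wedge product\<close>

lemma proj_perp_self: "proj_perp c c = 0"
  by (cases "c = 0") (auto simp: proj_perp_def)

lemma linear_proj_perp: "linear (proj_perp c)"
  unfolding proj_perp_def
  by (rule linearI) (auto simp: inner_add_left algebra_simps add_divide_distrib scaleR_add_left)

lemma norm_proj_perp_le: "norm (proj_perp c z) \<le> norm z"
proof (cases "c = 0")
  case False
  let ?a = "(z \<bullet> c) / (c \<bullet> c)"
  have orth: "proj_perp c z \<bullet> c = 0"
    using False by (simp add: proj_perp_def inner_diff_left)
  have "norm z ^ 2 = (proj_perp c z + ?a *\<^sub>R c) \<bullet> (proj_perp c z + ?a *\<^sub>R c)"
    by (simp add: proj_perp_def power2_norm_eq_inner)
  also have "\<dots> = norm (proj_perp c z) ^ 2 + ?a\<^sup>2 * (c \<bullet> c)"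
    using orth unfolding power2_norm_eq_inner
    by (simp add: inner_add_left inner_add_right inner_commute power2_eq_square)
  finally have "norm (proj_perp c z) ^ 2 \<le> norm z ^ 2" by simp
  then show ?thesis by (simp add: power2_le_iff_abs_le)
qed (simp add: proj_perp_def)

lemma wedge_norm_eq_norm_mult_proj_perp: "wedge_norm c z = norm c * norm (proj_perp c z)"
proof (cases "c = 0")
  case False
  have "(norm c * norm (proj_perp c z))\<^sup>2 = (c \<bullet> c) * (proj_perp c z \<bullet> proj_perp c z)"
    by (simp add: power_mult_distrib power2_norm_eq_inner)
  also have "\<dots> = (c \<bullet> c) * (z \<bullet> z) - (c \<bullet> z) * (z \<bullet> c)"
    using False by (simp add: proj_perp_def inner_diff_left inner_diff_right inner_commute
        field_simps power2_eq_square)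
  finally show ?thesis
    unfolding wedge_norm_def by (metis norm_ge_zero real_sqrt_abs zero_le_mult_iff abs_of_nonneg)
qed (simp add: wedge_norm_def)

lemma powr_ge_tangent:
  fixes s m q :: real
  assumes "s \<ge> 0" "m \<ge> 0" "q \<ge> 1"
  shows "m powr q + q * m powr (q - 1) * (s - m) \<le> s powr q"
proof (cases "m = 0")
  case False
  then have m: "m > 0" using assms by simp
  show ?thesis
  proof (cases "s = 0")
    case True
    have "m powr (q - 1) * m = m powr q" using m by (simp add: powr_diff)
    then have "m powr q + q * m powr (q - 1) * (s - m) = (1 - q) * m powr q"
      using True by (simp add: algebra_simps)
    also have "\<dots> \<le> 0" using assms by (simp add: mult_nonpos_nonneg)
    finally show ?thesis using True by simp
  next
    case False
    then have s: "s \<in> {0<..}" using assms by simp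
    have "(\<lambda>x. x powr q) s - (\<lambda>x. x powr q) m \<ge> q * m powr (q - 1) * (s - m)"
      by (rule convex_on_imp_above_tangent[OF powr_convex[OF assms(3)]])
         (use m s in \<open>auto simp: interior_open intro: has_field_derivative_at_within
           has_real_derivative_powr\<close>)
    then show ?thesis by simp
  qed
qed simp

lemma powr_integral_le_integral_powr:
  fixes g :: "real \<Rightarrow> real" and q :: real
  assumes cont: "continuous_on {0..1} g" and nonneg: "\<And>t. t \<in> {0..1} \<Longrightarrow> g t \<ge> 0"
    and q: "q \<ge> 1"
  shows "(integral {0..1} g) powr q \<le> integral {0..1} (\<lambda>t. g t powr q)"
proof -
  define m where "m = integral {0..1} g"
  have g_int: "(g has_integral m) {0..1}"
    unfolding m_def using integrable_continuous_interval[OF cont] by (simp add: integrable_integral)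
  have m: "m \<ge> 0" using has_integral_nonneg[OF g_int] nonneg by auto
  have cont_powr: "continuous_on {0..1} (\<lambda>t. g t powr q)"
    using nonneg q by (intro continuous_on_powr' cont continuous_on_const) auto
  let ?K = "q * m powr (q - 1)"
  have "((\<lambda>t. m powr q + ?K * (g t - m)) has_integral (m powr q + ?K * (m - m))) {0..1}"
    using has_integral_const_real[of "m powr q" 0 1] has_integral_const_real[of m 0 1]
    by (intro has_integral_add has_integral_mult_right has_integral_diff g_int) simp_all
  then have "((\<lambda>t. m powr q + ?K * (g t - m)) has_integral m powr q) {0..1}" by simp
  from has_integral_le[OF this integrable_integral[OF integrable_continuous_interval[OF cont_powr]]]
  show ?thesis
    using powr_ge_tangent[OF nonneg m q] unfolding m_def by auto
qed

lemma abs_mult_minus_powr_le: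
  fixes a b q L :: real
  assumes a: "1 / L \<le> a" "a \<le> L" and b: "1 / L \<le> b" "b \<le> L" and L: "L \<ge> 1" and q: "q \<ge> 2"
  shows "\<bar>a * b - b powr q\<bar> \<le> q\<^sup>2 * L powr (2 * q) * (L - 1)"
proof -
  have L0: "L > 0" using L by simp
  have ab0: "a > 0" "b > 0" using a b L0 by (auto intro: less_le_trans[of 0 "1/L"])
  define M where "M = L powr q"
  have M1: "M \<ge> 1" unfolding M_def using L q by (simp add: ge_one_powr_ge_zero)
  have "L powr 2 \<le> M" unfolding M_def using L q by (intro powr_mono) auto
  then have L2: "L * L \<le> M" using L0 by (simp add: power2_eq_square[symmetric] powr_numeral)
  have "1 / M \<le> 1 / (L * L)" using L2 L0 M1 by (intro divide_left_mono) auto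
  moreover have "a * b \<le> L * L" using a b ab0 by (intro mult_mono) auto
  moreover have "1 / (L * L) \<le> a * b" using a b L0 ab0
    by (metis mult_mono' divide_pos_pos less_imp_le times_divide_times_eq mult_1 zero_less_one)
  moreover have "b powr q \<le> M" unfolding M_def using b ab0 q by (intro powr_mono2) auto
  moreover have "1 / M \<le> b powr q"
  proof -
    have "(1 / L) powr q \<le> b powr q" using b L0 q by (intro powr_mono2) auto
    then show ?thesis unfolding M_def using L0 by (simp add: powr_divide)
  qed
  ultimately have "\<bar>a * b - b powr q\<bar> \<le> M - 1 / M"
    using L2 by linarith
  also have "\<dots> \<le> M * M - 1"
  proof -
    have "1 \<le> M * M" using M1 mult_mono[of 1 M 1 M] by simp
    then have "M * M - 1 \<le> M * (M * M - 1)"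
      using M1 mult_right_mono[of 1 M "M * M - 1"] by simp
    then show ?thesis using M1 by (simp add: field_simps)
  qed
  also have "M * M = L powr (2 * q)" unfolding M_def by (simp add: powr_add[symmetric])
  also have "L powr (2 * q) - 1 \<le> 2 * q * L powr (2 * q - 1) * (L - 1)"
    using powr_ge_tangent[of 1 L "2 * q"] L q by (simp add: algebra_simps)
  also have "\<dots> \<le> q\<^sup>2 * L powr (2 * q) * (L - 1)"
  proof -
    have "2 * q \<le> q\<^sup>2" using q by (simp add: power2_eq_square)
    moreover have "L powr (2 * q - 1) \<le> L powr (2 * q)" using L by (intro powr_mono) auto
    ultimately show ?thesis using L q by (intro mult_right_mono mult_mono) auto
  qed
  finally show ?thesis .
qed

section \<open>Integrals of periodic functions\<close>

lemma borel_measurable_round [measurable]: "(\<lambda>x::real. real_of_int (round x)) \<in> borel_measurable borel"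
  unfolding round_def by measurable

lemma borel_measurable_circ_diff [measurable]:
  assumes [measurable]: "f \<in> borel_measurable M" "g \<in> borel_measurable M"
  shows "(\<lambda>x. circ_diff (f x) (g x)) \<in> borel_measurable M"
proof -
  have "(\<lambda>x. f x - g x) \<in> borel_measurable M" by measurable
  from measurable_compose[OF this borel_measurable_round] show ?thesis
    unfolding circ_diff_def by measurable
qed

lemma nn_integral_Icc_eq_Ico:
  fixes f :: "real \<Rightarrow> ennreal"
  shows "(\<integral>\<^sup>+x. indicator {a..b} x * f x \<partial>lborel) = (\<integral>\<^sup>+x. indicator {a..<b} x * f x \<partial>lborel)"
  by (intro nn_integral_cong_AE eventually_mono[OF AE_lborel_singleton[of b]])
    (auto simp: indicator_def)

lemma nn_integral_periodic_shift:
  fixes f :: "real \<Rightarrow> ennreal"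
  assumes [measurable]: "f \<in> borel_measurable borel" and periodic: "\<And>x. f (x + 1) = f x"
  shows "(\<integral>\<^sup>+x. indicator {a..<a+1} x * f x \<partial>lborel) = (\<integral>\<^sup>+x. indicator {0..<1} x * f x \<partial>lborel)"
proof -
  define b where "b = frac a"
  have b: "0 \<le> b" "b < 1" unfolding b_def using frac_lt_1[of a] by simp_all
  have shift: "f (of_int \<lfloor>a\<rfloor> + x) = f x" for x
    using periodic_add_of_int[of f x "\<lfloor>a\<rfloor>", OF periodic] by (simp add: add.commute)
  have "(\<integral>\<^sup>+x. indicator {a..<a+1} x * f x \<partial>lborel)
      = (\<integral>\<^sup>+x. indicator {a..<a+1} (of_int \<lfloor>a\<rfloor> + 1 * x) * f (of_int \<lfloor>a\<rfloor> + 1 * x) \<partial>lborel)"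
    using nn_integral_real_affine[of "\<lambda>x. indicator {a..<a+1} x * f x" 1 "of_int \<lfloor>a\<rfloor>"] by simp
  also have "\<dots> = (\<integral>\<^sup>+x. indicator {b..<b+1} x * f x \<partial>lborel)"
    by (intro nn_integral_cong) (auto simp: shift b_def frac_def indicator_def)
  also have "\<dots> = (\<integral>\<^sup>+x. indicator {b..<1} x * f x + indicator {1..<b+1} x * f x \<partial>lborel)"
    using b by (intro nn_integral_cong) (auto simp: indicator_def)
  also have "\<dots> = (\<integral>\<^sup>+x. indicator {b..<1} x * f x \<partial>lborel)
      + (\<integral>\<^sup>+x. indicator {1..<b+1} (1 + 1 * x) * f (1 + 1 * x) \<partial>lborel)"
    using nn_integral_real_affine[of "\<lambda>x. indicator {1..<b+1} x * f x" 1 1]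
    by (simp add: nn_integral_add)
  also have "\<dots> = (\<integral>\<^sup>+x. indicator {b..<1} x * f x \<partial>lborel) + (\<integral>\<^sup>+x. indicator {0..<b} x * f x \<partial>lborel)"
    by (intro arg_cong2[where f = "(+)"] nn_integral_cong)
      (auto simp: periodic[unfolded add.commute[of _ 1]] indicator_def)
  also have "\<dots> = (\<integral>\<^sup>+x. indicator {0..<1} x * f x \<partial>lborel)"
    using b by (subst nn_integral_add[symmetric]) (auto intro!: nn_integral_cong simp: indicator_def)
  finally show ?thesis .
qed

lemma nn_integral_circ_diff:
  fixes f :: "real \<Rightarrow> ennreal"
  assumes [measurable]: "f \<in> borel_measurable borel"
  shows "(\<integral>\<^sup>+x. indicator {0..1} x * f (circ_diff x y) \<partial>lborel)
    = (\<integral>\<^sup>+h. indicator {-1/2..<1/2} h * f h \<partial>lborel)"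
proof -
  let ?g = "\<lambda>x. f (circ_diff x y)" and ?I = "{y - 1/2..<(y - 1/2) + 1}"
  have "(\<integral>\<^sup>+x. indicator {0..1} x * ?g x \<partial>lborel) = (\<integral>\<^sup>+x. indicator {0..<1} x * ?g x \<partial>lborel)"
    by (rule nn_integral_Icc_eq_Ico)
  also have "\<dots> = (\<integral>\<^sup>+x. indicator ?I x * ?g x \<partial>lborel)"
    using circ_diff_add_of_int(1)[of _ 1 y] by (intro nn_integral_periodic_shift[symmetric]) simp_all
  also have "\<dots> = (\<integral>\<^sup>+h. indicator ?I (y + 1 * h) * ?g (y + 1 * h) \<partial>lborel)"
    using nn_integral_real_affine[of "\<lambda>x. indicator ?I x * ?g x" 1 y] by simp
  also have "\<dots> = (\<integral>\<^sup>+h. indicator {-1/2..<1/2} h * f h \<partial>lborel)"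
    by (intro nn_integral_cong) (auto simp: indicator_def circ_diff_self_add)
  finally show ?thesis .
qed

lemma nn_integral_unit_square:
  fixes H :: "real \<times> real \<Rightarrow> ennreal"
  assumes [measurable]: "H \<in> borel_measurable (lborel \<Otimes>\<^sub>M lborel)"
  shows "(\<integral>\<^sup>+z. indicator ({0..1} \<times> {0..1}) z * H z \<partial>lborel)
     = (\<integral>\<^sup>+y. indicator {0..1} y * (\<integral>\<^sup>+x. indicator {0..1} x * H (x, y) \<partial>lborel) \<partial>lborel)"
proof -
  have "(\<integral>\<^sup>+z. indicator ({0..1} \<times> {0..1}) z * H z \<partial>lborel)
      = (\<integral>\<^sup>+y. (\<integral>\<^sup>+x. indicator ({0..1} \<times> {0..1}) (x, y) * H (x, y) \<partial>lborel) \<partial>lborel)"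
    unfolding lborel_prod[symmetric] by (rule lborel_pair.nn_integral_snd[symmetric]) measurable
  also have "\<dots> = (\<integral>\<^sup>+y. indicator {0..1} y * (\<integral>\<^sup>+x. indicator {0..1} x * H (x, y) \<partial>lborel) \<partial>lborel)"
    by (intro nn_integral_cong) (auto simp: indicator_def)
  finally show ?thesis .
qed

locale periodic_C1_curve =
  fixes u :: "real \<Rightarrow> real ^ 'n"
  assumes periodic: "\<And>x. u (x + 1) = u x" and C1: "u C1_differentiable_on UNIV"
begin

abbreviation u' where "u' \<equiv> dcurve u"

lemma has_vector_derivative: "(u has_vector_derivative u' x) (at x)"
  and continuous_derivative: "continuous_on UNIV u'"
proof -
  obtain D where D: "\<And>x. (u has_vector_derivative D x) (at x)" "continuous_on UNIV D"
    using C1 unfolding C1_differentiable_on_def by auto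
  have "u' = D" using D(1) by (auto simp: dcurve_def vector_derivative_at fun_eq_iff)
  then show "(u has_vector_derivative u' x) (at x)" "continuous_on UNIV u'" using D by auto
qed

lemma continuous_curve: "continuous_on UNIV u"
  using has_vector_derivative has_vector_derivative_continuous continuous_at_imp_continuous_on
  by blast

lemma derivative_periodic: "u' (x + 1) = u' x"
proof -
  have "((\<lambda>x. x + 1) has_vector_derivative 1) (at x)"
    by (auto intro!: derivative_eq_intros)
  from vector_diff_chain_at[OF this has_vector_derivative[of "x + 1"]]
  have "((\<lambda>x. u (x + 1)) has_vector_derivative u' (x + 1)) (at x)"
    by (simp add: o_def)
  then show ?thesis
    using periodic has_vector_derivative[of x] vector_derivative_unique_at by simp
qed

lemma continuous_on_derivative_increment: "continuous_on S (\<lambda>t. norm (u' (y + t * h) - u' y))"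
  by (intro continuous_intros continuous_on_compose2[OF continuous_derivative]) auto

lemma chord_has_integral:
  "((\<lambda>t. circ_diff x y *\<^sub>R u' (y + t * circ_diff x y)) has_integral (u x - u y)) {0..1}"
proof -
  let ?h = "circ_diff x y"
  have "((\<lambda>t. u (y + t * ?h)) has_vector_derivative ?h *\<^sub>R u' (y + t * ?h)) (at t within {0..1})"
    for t
  proof -
    have "((\<lambda>t. y + t * ?h) has_vector_derivative ?h) (at t)"
      by (auto intro!: derivative_eq_intros)
    from vector_diff_chain_at[OF this has_vector_derivative[of "y + t * ?h"]]
    show ?thesis by (simp add: o_def has_vector_derivative_at_within)
  qed
  from fundamental_theorem_of_calculus[of 0 1, OF _ this]
  show ?thesis using periodic_circ_diff[of u, OF periodic] by simp
qed

lemma norm_proj_perp_chord_le: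
  "norm (proj_perp (u' y) (u x - u y))
    \<le> circ_dist x y * integral {0..1} (\<lambda>t. norm (u' (y + t * circ_diff x y) - u' y))"
proof -
  let ?h = "circ_diff x y" and ?P = "proj_perp (u' y)"
  define g where "g t = norm (u' (y + t * ?h) - u' y)" for t
  have "bounded_linear ?P" using linear_proj_perp linear_conv_bounded_linear by blast
  from has_integral_linear[OF chord_has_integral this]
  have P_int: "((\<lambda>t. ?P (?h *\<^sub>R u' (y + t * ?h))) has_integral ?P (u x - u y)) {0..1}"
    by (simp add: o_def)
  have g_int: "((\<lambda>t. \<bar>?h\<bar> * g t) has_integral \<bar>?h\<bar> * integral {0..1} g) {0..1}"
    using integrable_continuous_interval[OF continuous_on_derivative_increment]
    unfolding g_def by (intro has_integral_mult_right) (simp add: integrable_integral)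
  have "norm (integral {0..1} (\<lambda>t. ?P (?h *\<^sub>R u' (y + t * ?h))))
      \<le> integral {0..1} (\<lambda>t. \<bar>?h\<bar> * g t)"
  proof (rule integral_norm_bound_integral)
    show "(\<lambda>t. ?P (?h *\<^sub>R u' (y + t * ?h))) integrable_on {0..1}" using P_int by blast
    show "(\<lambda>t. \<bar>?h\<bar> * g t) integrable_on {0..1}" using g_int by blast
    fix t
    \<comment> \<open>\<open>P\<close> annihilates \<open>u' y\<close>, so only the increment of \<open>u'\<close> survives.\<close>
    have "?P (?h *\<^sub>R u' (y + t * ?h)) = ?h *\<^sub>R ?P (u' (y + t * ?h) - u' y)"
      using linear_proj_perp[of "u' y"] proj_perp_self[of "u' y"]
      by (simp add: linear_cmul linear_diff)
    then show "norm (?P (?h *\<^sub>R u' (y + t * ?h))) \<le> \<bar>?h\<bar> * g t"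
      unfolding g_def using norm_proj_perp_le[of "u' y" "u' (y + t * ?h) - u' y"]
      by (simp add: mult_left_mono)
  qed
  then have "norm (?P (u x - u y)) \<le> \<bar>?h\<bar> * integral {0..1} g"
    using integral_unique[OF P_int] integral_unique[OF g_int] by simp
  then show ?thesis unfolding g_def abs_circ_diff .
qed

lemma derivative_uniformly_continuous:
  assumes "\<epsilon> > 0"
  obtains \<eta> where "\<eta> > 0" "\<And>s s'. \<bar>s - s'\<bar> \<le> \<eta> \<Longrightarrow> norm (u' s - u' s') \<le> \<epsilon>"
proof -
  have "uniformly_continuous_on {-1..2} u'"
    by (rule compact_uniformly_continuous) (auto intro: continuous_on_subset[OF continuous_derivative])
  then obtain \<eta>0 where \<eta>0: "\<eta>0 > 0"
    and close: "\<And>s s'. s \<in> {-1..2} \<Longrightarrow> s' \<in> {-1..2} \<Longrightarrow> dist s' s < \<eta>0 \<Longrightarrow> dist (u' s') (u' s) < \<epsilon>"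
    unfolding uniformly_continuous_on_def using assms by metis
  define \<eta> where "\<eta> = min (\<eta>0 / 2) (1 / 2)"
  have "norm (u' s - u' s') \<le> \<epsilon>" if "\<bar>s - s'\<bar> \<le> \<eta>" for s s'
  proof -
    \<comment> \<open>Translate by an integer so that both points lie in \<open>[-1, 2]\<close>.\<close>
    define k where "k = - \<lfloor>s\<rfloor>"
    have u'_shift: "u' s = u' (s + of_int k)" "u' s' = u' (s' + of_int k)"
      using periodic_add_of_int[of u', OF derivative_periodic] by auto
    have "\<bar>s - s'\<bar> \<le> 1/2" using that by (simp add: \<eta>_def)
    moreover have "0 \<le> s + of_int k" "s + of_int k < 1"
      using frac_ge_0[of s] frac_lt_1[of s] by (simp_all add: k_def frac_def)
    ultimately have mem: "s + of_int k \<in> {-1..2}" "s' + of_int k \<in> {-1..2}"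
      unfolding abs_le_iff by auto
    have "dist (s + of_int k) (s' + of_int k) < \<eta>0"
      using that \<eta>0 unfolding \<eta>_def dist_real_def by auto
    from close[OF mem(2) mem(1) this] have "dist (u' s) (u' s') < \<epsilon>"
      unfolding u'_shift .
    then show ?thesis by (simp add: dist_norm)
  qed
  moreover have "\<eta> > 0" using \<eta>0 by (simp add: \<eta>_def)
  ultimately show ?thesis using that by blast
qed

end

section \<open>Admissible curves are bi-Lipschitz\<close>

lemma compact_continuous_pos_lower_bound:
  fixes f :: "'a::topological_space \<Rightarrow> real"
  assumes "compact C" "continuous_on C f" "\<And>z. z \<in> C \<Longrightarrow> f z > 0"
  obtains m where "m > 0" "\<And>z. z \<in> C \<Longrightarrow> m \<le> f z"
proof (cases "C = {}")
  case False
  obtain z0 where "z0 \<in> C" "\<And>z. z \<in> C \<Longrightarrow> f z0 \<le> f z"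
    using continuous_attains_inf[OF assms(1) False assms(2)] by blast
  then show ?thesis using that[of "f z0"] assms(3) by blast
qed (use that[of 1] in simp)

locale admissible_curve = periodic_C1_curve u for u :: "real \<Rightarrow> real ^ 'n" +
  fixes c :: real
  assumes inj: "inj_on u {0..<1}" and c: "c > 0"
    and derivative_lower_bound: "\<And>x. norm (dcurve u x) \<ge> c"
begin

lemma chord_ge_near:
  obtains \<eta> where "\<eta> > 0" "\<And>x y. circ_dist x y \<le> \<eta> \<Longrightarrow> circ_dist x y * c / 2 \<le> norm (u x - u y)"
proof -
  obtain \<eta> where \<eta>: "\<eta> > 0" and close: "\<And>s s'. \<bar>s - s'\<bar> \<le> \<eta> \<Longrightarrow> norm (u' s - u' s') \<le> c / 2"
    using derivative_uniformly_continuous[of "c / 2"] c by auto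
  have "circ_dist x y * c / 2 \<le> norm (u x - u y)" if near: "circ_dist x y \<le> \<eta>" for x y
  proof -
    let ?h = "circ_diff x y"
    \<comment> \<open>The chord differs from \<open>?h *\<^sub>R u' y\<close>, of length at least \<open>\<bar>?h\<bar> c\<close>, by at most \<open>\<bar>?h\<bar> c / 2\<close>.\<close>
    have "((\<lambda>t. ?h *\<^sub>R u' (y + t * ?h) - ?h *\<^sub>R u' y) has_integral (u x - u y - ?h *\<^sub>R u' y)) {0..1}"
      using has_integral_diff[OF chord_has_integral has_integral_const_real[of "?h *\<^sub>R u' y" 0 1]]
      by simp
    moreover have "norm (?h *\<^sub>R u' (y + t * ?h) - ?h *\<^sub>R u' y) \<le> \<bar>?h\<bar> * (c / 2)"
      if "t \<in> {0..1}" for t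
    proof -
      have "\<bar>t * ?h\<bar> \<le> \<bar>?h\<bar>" using that by (simp add: abs_mult mult_left_le_one_le)
      then have "norm (u' (y + t * ?h) - u' y) \<le> c / 2"
        using near abs_circ_diff[of x y] close by simp
      then have "\<bar>?h\<bar> * norm (u' (y + t * ?h) - u' y) \<le> \<bar>?h\<bar> * (c / 2)"
        by (rule mult_left_mono) simp
      then show ?thesis by (simp add: scaleR_diff_right[symmetric])
    qed
    ultimately have "norm (u x - u y - ?h *\<^sub>R u' y) \<le> \<bar>?h\<bar> * (c / 2) * measure lborel {0..1::real}"
      using c by (intro has_integral_bound_real[of _ "{}"]) auto
    moreover have "\<bar>?h\<bar> * c \<le> norm (?h *\<^sub>R u' y)"
      using derivative_lower_bound[of y] by (simp add: mult_left_mono)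
    moreover have "norm (?h *\<^sub>R u' y) \<le> norm (u x - u y) + norm (u x - u y - ?h *\<^sub>R u' y)"
      by (metis norm_minus_commute norm_triangle_sub)
    ultimately show ?thesis using abs_circ_diff[of x y] by simp
  qed
  with \<eta> that show ?thesis by blast
qed

lemma chord_ge_far:
  assumes "\<eta> > 0"
  obtains m where "m > 0" "\<And>x y. \<eta> \<le> circ_dist x y \<Longrightarrow> m \<le> norm (u x - u y)"
proof -
  \<comment> \<open>On \<open>[0,1]\<^sup>2\<close>, \<open>\<eta> \<le> circ_dist x y\<close> iff \<open>x - y\<close>, \<open>x - y - 1\<close> and \<open>x - y + 1\<close> all have modulus
    at least \<open>\<eta>\<close>; in this form \<open>C\<close> is evidently compact.\<close>
  define C where "C = ({0..1} \<times> {0..1}) \<inter> {z::real \<times> real. \<eta> \<le> \<bar>fst z - snd z\<bar>}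
    \<inter> {z. \<eta> \<le> \<bar>fst z - snd z - 1\<bar>} \<inter> {z. \<eta> \<le> \<bar>fst z - snd z + 1\<bar>}"
  have "compact C" unfolding C_def
    by (intro compact_Int_closed compact_Times compact_Icc closed_Collect_le continuous_intros)
  have C_frac: "(frac x, frac y) \<in> C" if "\<eta> \<le> circ_dist x y" for x y
  proof -
    have "\<eta> \<le> circ_dist (frac x) (frac y)" using that circ_dist_frac[of x y] by simp
    moreover have "circ_dist (frac x) (frac y) \<le> \<bar>frac x - frac y\<bar>"
      "circ_dist (frac x) (frac y) \<le> \<bar>frac x - frac y - 1\<bar>"
      "circ_dist (frac x) (frac y) \<le> \<bar>frac x - frac y + 1\<bar>"
      using circ_dist_le[of "frac x" "frac y" 0] circ_dist_le[of "frac x" "frac y" 1]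
        circ_dist_le[of "frac x" "frac y" "-1"] by simp_all
    moreover have "frac x \<in> {0..1}" "frac y \<in> {0..1}"
      using frac_lt_1 frac_ge_0 less_imp_le by auto
    ultimately show ?thesis unfolding C_def by simp
  qed
  have "norm (u (fst z) - u (snd z)) > 0" if "z \<in> C" for z
  proof -
    obtain x y where z: "z = (x, y)" by fastforce
    have "u x \<noteq> u y"
    proof
      assume "u x = u y"
      then have "frac x = frac y"
        using periodic_frac[of u, OF periodic] by (intro inj_onD[OF inj]) (auto simp: frac_lt_1)
      then have "x - y = of_int (\<lfloor>x\<rfloor> - \<lfloor>y\<rfloor>)" by (simp add: frac_def)
      moreover have "\<lfloor>x\<rfloor> \<in> {0, 1}" "\<lfloor>y\<rfloor> \<in> {0, 1}" using that z by (auto simp: C_def floor_eq_iff)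
      ultimately have "x - y = 0 \<or> x - y = 1 \<or> x - y = -1" by auto
      then show False using that z assms by (auto simp: C_def)
    qed
    then show ?thesis using z by simp
  qed
  moreover have "continuous_on C (\<lambda>z. norm (u (fst z) - u (snd z)))"
    by (intro continuous_intros continuous_on_compose2[OF continuous_curve]) auto
  ultimately obtain m where "m > 0" and m: "\<And>z. z \<in> C \<Longrightarrow> m \<le> norm (u (fst z) - u (snd z))"
    using compact_continuous_pos_lower_bound[OF \<open>compact C\<close>] by blast
  show ?thesis
  proof (rule that[OF \<open>m > 0\<close>])
    show "m \<le> norm (u x - u y)" if "\<eta> \<le> circ_dist x y" for x y
      using m[OF C_frac[OF that]] periodic_frac[of u, OF periodic] by simp
  qed
qed

lemma circ_dist_le_chord:
  obtains M where "M > 0" "\<And>x y. circ_dist x y \<le> M * norm (u x - u y)"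
proof -
  obtain \<eta> where \<eta>: "\<eta> > 0"
    and near: "\<And>x y. circ_dist x y \<le> \<eta> \<Longrightarrow> circ_dist x y * c / 2 \<le> norm (u x - u y)"
    using chord_ge_near by blast
  obtain m where m: "m > 0" and far: "\<And>x y. \<eta> \<le> circ_dist x y \<Longrightarrow> m \<le> norm (u x - u y)"
    using chord_ge_far[OF \<eta>] by blast
  define M where "M = 2 / c + 1 / (2 * m)"
  have "circ_dist x y \<le> M * norm (u x - u y)" for x y
  proof (cases "circ_dist x y \<le> \<eta>")
    case True
    then have "circ_dist x y \<le> (2 / c) * norm (u x - u y)"
      using near[OF True] c by (simp add: field_simps)
    also have "\<dots> \<le> M * norm (u x - u y)" unfolding M_def distrib_right using m by simp
    finally show ?thesis .
  next
    case False
    then have "m \<le> norm (u x - u y)" using far by simp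
    have "circ_dist x y \<le> (1 / (2 * m)) * m"
      using circ_dist_le_half[of x y] m by simp
    also have "\<dots> \<le> (1 / (2 * m)) * norm (u x - u y)"
      using \<open>m \<le> norm (u x - u y)\<close> m by (intro mult_left_mono) auto
    also have "\<dots> \<le> M * norm (u x - u y)" unfolding M_def distrib_right using c by simp
    finally show ?thesis .
  qed
  moreover have "M > 0" using c m by (simp add: M_def add_pos_pos)
  ultimately show ?thesis using that by blast
qed

lemma circ_dist_div_chord_le_bil:
  assumes "circ_dist x y > 0"
  shows "u x \<noteq> u y" and "circ_dist x y / norm (u x - u y) \<le> bil u"
proof -
  obtain M where M: "M > 0" "\<And>x y. circ_dist x y \<le> M * norm (u x - u y)"
    using circ_dist_le_chord by blast
  show "u x \<noteq> u y" using M(2)[of x y] assms by auto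
  define S where "S = {(x, y). x \<in> {0..<1} \<and> y \<in> {0..<1} \<and> x \<noteq> (y::real)}"
  have bdd: "bdd_above ((\<lambda>z. circ_dist (fst z) (snd z) / norm (u (fst z) - u (snd z))) ` S)"
  proof (rule bdd_aboveI2)
    fix z :: "real \<times> real"
    show "circ_dist (fst z) (snd z) / norm (u (fst z) - u (snd z)) \<le> M"
      using M(2)[of "fst z" "snd z"] M(1) by (cases "u (fst z) = u (snd z)") (auto simp: field_simps)
  qed
  have "frac x \<noteq> frac y"
  proof
    assume "frac x = frac y"
    then have "circ_dist x y = 0" using circ_dist_frac[of x y] by (simp add: circ_dist_def)
    then show False using assms by simp
  qed
  then have "(frac x, frac y) \<in> S"
    using frac_lt_1[of x] frac_lt_1[of y] frac_ge_0[of x] frac_ge_0[of y] by (simp add: S_def)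
  from cSUP_upper[OF this bdd]
  have "circ_dist (frac x) (frac y) / norm (u (frac x) - u (frac y)) \<le> bil u"
    unfolding bil_def S_def[symmetric] by simp
  then show "circ_dist x y / norm (u x - u y) \<le> bil u"
    using circ_dist_frac[of x y] periodic_frac[of u, OF periodic] by simp
qed

lemma chord_ge_circ_dist_div_bil:
  assumes "circ_dist x y > 0"
  shows "bil u > 0" and "circ_dist x y / bil u \<le> norm (u x - u y)"
proof -
  have chord: "norm (u x - u y) > 0" using circ_dist_div_chord_le_bil(1)[OF assms] by simp
  have "0 < circ_dist x y / norm (u x - u y)" using assms chord by simp
  also have "\<dots> \<le> bil u" by (rule circ_dist_div_chord_le_bil(2)[OF assms])
  finally show "bil u > 0" .
  then show "circ_dist x y / bil u \<le> norm (u x - u y)"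
    using circ_dist_div_chord_le_bil(2)[OF assms] chord by (simp add: field_simps)
qed

end

section \<open>Averaged difference quotients and the Gagliardo seminorm\<close>

definition diff_quot_powr :: "(real \<Rightarrow> real ^ 'n) \<Rightarrow> real \<Rightarrow> real \<Rightarrow> real \<Rightarrow> real \<Rightarrow> real" where
  "diff_quot_powr w q y h t = norm (w (y + t * h) - w y) powr q / \<bar>h\<bar> powr q"

definition avg_diff_quot_powr :: "(real \<Rightarrow> real ^ 'n) \<Rightarrow> real \<Rightarrow> real \<Rightarrow> real \<Rightarrow> ennreal" where
  "avg_diff_quot_powr w q x y =
    (\<integral>\<^sup>+t. indicator {0..1} t * ennreal (diff_quot_powr w q y (circ_diff x y) t) \<partial>lborel)"

lemma borel_measurable_gag_integrand [measurable]:
  assumes [measurable]: "w \<in> borel_measurable borel"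
  shows "gag_integrand w s q \<in> borel_measurable (lborel \<Otimes>\<^sub>M lborel)"
  unfolding gag_integrand_def abs_circ_diff[symmetric] by measurable

lemma borel_measurable_diff_quot_powr [measurable]:
  assumes [measurable]: "w \<in> borel_measurable borel"
    "f \<in> borel_measurable M" "g \<in> borel_measurable M" "k \<in> borel_measurable M"
  shows "(\<lambda>x. diff_quot_powr w q (f x) (g x) (k x)) \<in> borel_measurable M"
  unfolding diff_quot_powr_def by measurable

lemma borel_measurable_avg_diff_quot_powr [measurable]:
  assumes [measurable]: "w \<in> borel_measurable borel"
  shows "(\<lambda>z. avg_diff_quot_powr w q (fst z) (snd z)) \<in> borel_measurable (lborel \<Otimes>\<^sub>M lborel)"
  unfolding avg_diff_quot_powr_def by measurable

lemma diff_quot_powr_scale: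
  assumes "t > 0"
  shows "t powr q * diff_quot_powr w q y (t * h) 1 = diff_quot_powr w q y h t"
proof (cases "h = 0")
  case False
  have "\<bar>t * h\<bar> powr q = t powr q * \<bar>h\<bar> powr q" using assms by (simp add: abs_mult powr_mult)
  then show ?thesis using assms False by (simp add: diff_quot_powr_def mult.commute)
qed (simp add: diff_quot_powr_def)

lemma continuous_on_diff_quot_powr:
  assumes "continuous_on UNIV w" "q > 0"
  shows "continuous_on {0..1} (diff_quot_powr w q y h)"
proof (cases "h = 0")
  case False
  have "continuous_on {0..1} (\<lambda>t. norm (w (y + t * h) - w y) powr q)"
  proof (rule continuous_on_powr')
    show "continuous_on {0..1} (\<lambda>t. norm (w (y + t * h) - w y))"
      by (intro continuous_intros continuous_on_compose2[OF assms(1)]) auto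
  qed (use assms(2) in auto)
  then show ?thesis
    unfolding diff_quot_powr_def using False
    by (intro continuous_on_divide continuous_on_const) auto
qed (simp add: diff_quot_powr_def)

lemma avg_diff_quot_powr_eq_integral:
  assumes "continuous_on UNIV w" "q > 0"
  shows "avg_diff_quot_powr w q x y = ennreal (integral {0..1} (diff_quot_powr w q y (circ_diff x y)))"
proof -
  have "(diff_quot_powr w q y (circ_diff x y) has_integral
      integral {0..1} (diff_quot_powr w q y (circ_diff x y))) {0..1}"
    using integrable_continuous_interval[OF continuous_on_diff_quot_powr[OF assms]]
    by (simp add: integrable_integral)
  from nn_integral_has_integral_lebesgue[OF _ this] show ?thesis
    unfolding avg_diff_quot_powr_def by (simp add: diff_quot_powr_def indicator_mult_ennreal)
qed

lemma nn_integral_diff_quot_powr_le: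
  assumes [measurable]: "w \<in> borel_measurable borel" and t: "t \<in> {0..1}"
  shows "(\<integral>\<^sup>+h. indicator {-1/2..<1/2} h * ennreal (diff_quot_powr w q y h t) \<partial>lborel)
    \<le> ennreal (t powr (q - 1)) *
      (\<integral>\<^sup>+r. indicator {-1/2..<1/2} r * ennreal (diff_quot_powr w q y r 1) \<partial>lborel)"
proof (cases "t = 0")
  case True
  then show ?thesis by (simp add: diff_quot_powr_def)
next
  case False
  then have t0: "t > 0" using t by simp
  let ?D = "\<lambda>r. ennreal (diff_quot_powr w q y r 1)"
  let ?F = "\<lambda>r. ennreal (t powr q) * (indicator {-t/2..<t/2} r * ?D r)"
  have "(\<integral>\<^sup>+r. ?F r \<partial>lborel) = ennreal t * (\<integral>\<^sup>+h. ?F (0 + t * h) \<partial>lborel)"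
    using nn_integral_real_affine[of ?F t 0] t0 by simp
  also have "(\<integral>\<^sup>+h. ?F (0 + t * h) \<partial>lborel)
      = (\<integral>\<^sup>+h. indicator {-1/2..<1/2} h * ennreal (diff_quot_powr w q y h t) \<partial>lborel)"
  proof (intro nn_integral_cong)
    fix h
    have "t * h \<in> {-t/2..<t/2} \<longleftrightarrow> h \<in> {-1/2..<1/2}"
      using mult_le_cancel_left_pos[OF t0, of "-1/2" h] mult_less_cancel_left_pos[OF t0, of h "1/2"]
      by simp
    moreover have "ennreal (t powr q) * ?D (t * h) = ennreal (diff_quot_powr w q y h t)"
      using diff_quot_powr_scale[OF t0, of q w y h] by (simp add: diff_quot_powr_def ennreal_mult'[symmetric])
    ultimately show "?F (0 + t * h) = indicator {-1/2..<1/2} h * ennreal (diff_quot_powr w q y h t)"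
      by (simp add: indicator_def)
  qed
  finally have "ennreal t * (\<integral>\<^sup>+h. indicator {-1/2..<1/2} h * ennreal (diff_quot_powr w q y h t) \<partial>lborel)
      = ennreal (t powr q) * (\<integral>\<^sup>+r. indicator {-t/2..<t/2} r * ?D r \<partial>lborel)"
    by (simp add: nn_integral_cmult)
  also have "\<dots> \<le> ennreal (t powr q) * (\<integral>\<^sup>+r. indicator {-1/2..<1/2} r * ?D r \<partial>lborel)"
    using t by (intro mult_left_mono nn_integral_mono) (auto simp: indicator_def)
  also have "\<dots> = ennreal t * (ennreal (t powr (q - 1)) * (\<integral>\<^sup>+r. indicator {-1/2..<1/2} r * ?D r \<partial>lborel))"
  proof -
    have "t powr q = t * t powr (q - 1)" using t0 by (simp add: powr_diff)
    then have "ennreal (t powr q) = ennreal t * ennreal (t powr (q - 1))"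
      using t0 by (simp add: ennreal_mult')
    then show ?thesis by (simp add: mult.assoc)
  qed
  finally show ?thesis using t0 by (subst (asm) ennreal_mult_le_mult_iff) auto
qed

lemma nn_integral_avg_diff_quot_powr_le:
  assumes [measurable]: "w \<in> borel_measurable borel" and q: "q > 0"
  shows "(\<integral>\<^sup>+x. indicator {0..1} x * avg_diff_quot_powr w q x y \<partial>lborel)
    \<le> ennreal (1 / q) * (\<integral>\<^sup>+r. indicator {-1/2..<1/2} r * ennreal (diff_quot_powr w q y r 1) \<partial>lborel)"
proof -
  let ?D = "\<lambda>t h. ennreal (diff_quot_powr w q y h t)"
  have "((\<lambda>t. t powr (q - 1)) has_integral (1 powr (q - 1 + 1) / (q - 1 + 1))) {0..1}"
    using q by (intro has_integral_powr_from_0) auto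
  then have "((\<lambda>t. t powr (q - 1)) has_integral (1 / q)) {0..1}" by simp
  then have powr_int: "(\<integral>\<^sup>+t. ennreal (indicator {0..1} t * t powr (q - 1)) \<partial>lborel) = ennreal (1 / q)"
    by (intro nn_integral_has_integral_lebesgue) auto
  have "(\<integral>\<^sup>+x. indicator {0..1} x * avg_diff_quot_powr w q x y \<partial>lborel)
      = (\<integral>\<^sup>+x. (\<integral>\<^sup>+t. indicator {0..1} x * (indicator {0..1} t * ?D t (circ_diff x y)) \<partial>lborel) \<partial>lborel)"
    unfolding avg_diff_quot_powr_def by (intro nn_integral_cong nn_integral_cmult[symmetric]) measurable
  also have "\<dots> = (\<integral>\<^sup>+t. (\<integral>\<^sup>+x. indicator {0..1} x * (indicator {0..1} t * ?D t (circ_diff x y)) \<partial>lborel) \<partial>lborel)"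
    by (rule lborel_pair.Fubini'[symmetric]) measurable
  also have "\<dots> = (\<integral>\<^sup>+t. indicator {0..1} t * (\<integral>\<^sup>+h. indicator {-1/2..<1/2} h * ?D t h \<partial>lborel) \<partial>lborel)"
  proof (intro nn_integral_cong)
    fix t
    have "(\<lambda>x. indicator {0..1} x * ?D t (circ_diff x y)) \<in> borel_measurable lborel" by measurable
    from nn_integral_cmult[OF this, of "indicator {0..1} t"]
    show "(\<integral>\<^sup>+x. indicator {0..1} x * (indicator {0..1} t * ?D t (circ_diff x y)) \<partial>lborel)
        = indicator {0..1} t * (\<integral>\<^sup>+h. indicator {-1/2..<1/2} h * ?D t h \<partial>lborel)"
      using nn_integral_circ_diff[of "?D t" y] by (simp add: mult.left_commute)
  qed
  also have "\<dots> \<le> (\<integral>\<^sup>+t. ennreal (indicator {0..1} t * t powr (q - 1))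
      * (\<integral>\<^sup>+r. indicator {-1/2..<1/2} r * ?D 1 r \<partial>lborel) \<partial>lborel)"
    using nn_integral_diff_quot_powr_le[of w _ q y]
    by (intro nn_integral_mono) (simp add: indicator_def)
  also have "\<dots> = ennreal (1 / q) * (\<integral>\<^sup>+r. indicator {-1/2..<1/2} r * ?D 1 r \<partial>lborel)"
    by (simp add: nn_integral_multc powr_int)
  finally show ?thesis .
qed

lemma gag_integrand_eq_diff_quot_powr:
  assumes "\<And>x. w (x + 1) = w x" "q \<noteq> 0"
  shows "gag_integrand w (1 - 1 / q) q (x, y) = diff_quot_powr w q y (circ_diff x y) 1"
proof -
  have "1 + (1 - 1 / q) * q = q" using assms(2) by (simp add: algebra_simps)
  then show ?thesis
    using periodic_circ_diff[of w y x, OF assms(1)]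
    by (simp add: gag_integrand_def diff_quot_powr_def abs_circ_diff)
qed

lemma nn_integral_avg_diff_quot_powr_le_gag:
  assumes [measurable]: "w \<in> borel_measurable borel"
    and periodic: "\<And>x. w (x + 1) = w x" and q: "q > 0"
  shows "(\<integral>\<^sup>+z. indicator ({0..1} \<times> {0..1}) z * avg_diff_quot_powr w q (fst z) (snd z) \<partial>lborel)
    \<le> ennreal (1 / q) *
      (\<integral>\<^sup>+z. indicator ({0..1} \<times> {0..1}) z * ennreal (gag_integrand w (1 - 1 / q) q z) \<partial>lborel)"
proof -
  let ?D = "\<lambda>y r. ennreal (diff_quot_powr w q y r 1)"
  have gag_slice: "(\<integral>\<^sup>+x. indicator {0..1} x * ennreal (gag_integrand w (1 - 1 / q) q (x, y)) \<partial>lborel)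
      = (\<integral>\<^sup>+r. indicator {-1/2..<1/2} r * ?D y r \<partial>lborel)" for y
  proof -
    have "gag_integrand w (1 - 1 / q) q (x, y) = diff_quot_powr w q y (circ_diff x y) 1" for x
      by (rule gag_integrand_eq_diff_quot_powr) (use periodic q in auto)
    then show ?thesis using nn_integral_circ_diff[of "?D y" y] by simp
  qed
  have "(\<integral>\<^sup>+z. indicator ({0..1} \<times> {0..1}) z * avg_diff_quot_powr w q (fst z) (snd z) \<partial>lborel)
      = (\<integral>\<^sup>+y. indicator {0..1} y * (\<integral>\<^sup>+x. indicator {0..1} x * avg_diff_quot_powr w q x y \<partial>lborel) \<partial>lborel)"
    by (subst nn_integral_unit_square) simp_all
  also have "\<dots> \<le> (\<integral>\<^sup>+y. ennreal (1 / q) * (indicator {0..1} y * (\<integral>\<^sup>+r. indicator {-1/2..<1/2} r * ?D y r \<partial>lborel)) \<partial>lborel)"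
    using nn_integral_avg_diff_quot_powr_le[OF _ q, of w]
    by (intro nn_integral_mono) (simp add: indicator_def)
  also have "\<dots> = ennreal (1 / q) *
      (\<integral>\<^sup>+z. indicator ({0..1} \<times> {0..1}) z * ennreal (gag_integrand w (1 - 1 / q) q z) \<partial>lborel)"
  proof -
    have "(\<integral>\<^sup>+y. ennreal (1 / q) * (indicator {0..1} y * (\<integral>\<^sup>+r. indicator {-1/2..<1/2} r * ?D y r \<partial>lborel)) \<partial>lborel)
        = ennreal (1 / q) * (\<integral>\<^sup>+y. indicator {0..1} y *
          (\<integral>\<^sup>+x. indicator {0..1} x * ennreal (gag_integrand w (1 - 1 / q) q (x, y)) \<partial>lborel) \<partial>lborel)"
      unfolding gag_slice[symmetric] by (rule nn_integral_cmult) measurable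
    then show ?thesis by (subst nn_integral_unit_square) simp_all
  qed
  finally show ?thesis .
qed

section \<open>The tangent-point kernel\<close>

definition tp_kernel :: "real \<Rightarrow> (real \<Rightarrow> real ^ 'n) \<Rightarrow> real \<times> real \<Rightarrow> real" where
  "tp_kernel q u z = norm (proj_perp (dcurve u (snd z)) (u (fst z) - u (snd z))) powr q
    / norm (u (fst z) - u (snd z)) powr (2 * q)"

lemma TP_cl_eq_set_integral_tp_kernel:
  "TP_cl q u = (1 / q) * (LINT z : {0..1} \<times> {0..1} | lborel.
     tp_kernel q u z * (norm (dcurve u (fst z)) * norm (dcurve u (snd z))))"
  unfolding TP_cl_def tp_kernel_def Let_def by (simp add: mult.assoc)

lemma TP_eq_set_integral_tp_kernel:
  "TP q u = (1 / q) * (LINT z : {0..1} \<times> {0..1} | lborel.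
     tp_kernel q u z * norm (dcurve u (snd z)) powr q)"
  unfolding TP_def tp_kernel_def Let_def wedge_norm_eq_norm_mult_proj_perp
  by (simp add: powr_mult mult_ac)

lemma gag_seminorm_powr:
  assumes "q > 0"
  shows "gag_seminorm f s q powr q = (LINT z : {0..1} \<times> {0..1} | lborel. gag_integrand f s q z)"
proof -
  have "(LINT z : {0..1} \<times> {0..1} | lborel. gag_integrand f s q z) \<ge> 0"
    unfolding set_lebesgue_integral_def
    by (intro integral_nonneg_AE) (simp add: gag_integrand_def indicator_def)
  then show ?thesis
    using assms unfolding gag_seminorm_def by (cases "q = 0") (simp_all add: powr_powr)
qed

lemma set_integrable_nn_integral_le:
  fixes f g :: "'a \<Rightarrow> real"
  assumes [measurable]: "f \<in> borel_measurable M" "A \<in> sets M"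
    and g: "set_integrable M A g" and f_nonneg: "\<And>z. f z \<ge> 0" and g_nonneg: "\<And>z. g z \<ge> 0"
    and c: "c \<ge> 0"
    and le: "(\<integral>\<^sup>+z. indicator A z * ennreal (f z) \<partial>M) \<le> ennreal c * (\<integral>\<^sup>+z. indicator A z * ennreal (g z) \<partial>M)"
  shows "set_integrable M A f" and "(LINT z:A|M. f z) \<le> c * (LINT z:A|M. g z)"
proof -
  have nn_eq: "(\<integral>\<^sup>+z. indicator A z * ennreal (h z) \<partial>M) = (\<integral>\<^sup>+z. ennreal (indicator A z *\<^sub>R h z) \<partial>M)"
    for h :: "'a \<Rightarrow> real"
    by (intro nn_integral_cong) (simp add: indicator_def)
  have g_int_nonneg: "(LINT z:A|M. g z) \<ge> 0"
    unfolding set_lebesgue_integral_def by (intro integral_nonneg_AE) (simp add: indicator_def g_nonneg)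
  have "(\<integral>\<^sup>+z. indicator A z * ennreal (g z) \<partial>M) = ennreal (LINT z:A|M. g z)"
    using g g_nonneg unfolding nn_eq set_lebesgue_integral_def set_integrable_def
    by (intro nn_integral_eq_integral) (auto simp: indicator_def)
  with le c g_int_nonneg have f_le: "(\<integral>\<^sup>+z. ennreal (indicator A z *\<^sub>R f z) \<partial>M) \<le> ennreal (c * (LINT z:A|M. g z))"
    by (simp add: nn_eq ennreal_mult)
  show f_int: "set_integrable M A f"
    unfolding set_integrable_def
  proof (rule integrableI_nonneg)
    show "(\<lambda>z. indicator A z *\<^sub>R f z) \<in> borel_measurable M" by measurable
    show "AE z in M. 0 \<le> indicator A z *\<^sub>R f z" using f_nonneg by (simp add: indicator_def)
    show "(\<integral>\<^sup>+z. ennreal (indicator A z *\<^sub>R f z) \<partial>M) < \<infinity>"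
      using f_le by (simp add: le_less_trans)
  qed
  have "ennreal (LINT z:A|M. f z) = (\<integral>\<^sup>+z. ennreal (indicator A z *\<^sub>R f z) \<partial>M)"
    using f_int f_nonneg unfolding set_lebesgue_integral_def set_integrable_def
    by (intro nn_integral_eq_integral[symmetric]) (auto simp: indicator_def)
  also note f_le
  finally show "(LINT z:A|M. f z) \<le> c * (LINT z:A|M. g z)"
    using c g_int_nonneg by (subst (asm) ennreal_le_iff) auto
qed

lemma set_integrable_mult_bounded:
  fixes G w :: "'x \<Rightarrow> real"
  assumes G: "set_integrable M A G" and [measurable]: "w \<in> borel_measurable M"
    and bound: "\<And>z. \<bar>w z\<bar> \<le> K"
  shows "set_integrable M A (\<lambda>z. G z * w z)"
proof (rule set_integrable_bound[OF set_integrable_mult_right[OF set_integrable_abs[OF G], of K]])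
  have "(\<lambda>z. indicator A z *\<^sub>R G z) \<in> borel_measurable M"
    using G unfolding set_integrable_def by (rule borel_measurable_integrable)
  from borel_measurable_times[OF this assms(2)]
  show "set_borel_measurable M A (\<lambda>z. G z * w z)"
    unfolding set_borel_measurable_def by (simp add: mult.assoc)
  show "AE z in M. z \<in> A \<longrightarrow> norm (G z * w z) \<le> norm (K * \<bar>G z\<bar>)"
  proof (intro AE_I2 impI)
    fix z
    have "norm (G z * w z) \<le> \<bar>G z\<bar> * K" unfolding real_norm_def abs_mult
      using bound by (intro mult_left_mono) auto
    also have "\<dots> \<le> norm (K * \<bar>G z\<bar>)" by (simp add: abs_mult mult.commute mult_right_mono)
    finally show "norm (G z * w z) \<le> norm (K * \<bar>G z\<bar>)" .
  qed
qed

lemma abs_set_integral_weights_diff_le: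
  fixes G a b :: "'x \<Rightarrow> real"
  assumes G: "set_integrable M A G" and G_nonneg: "\<And>z. G z \<ge> 0"
    and [measurable]: "a \<in> borel_measurable M" "b \<in> borel_measurable M"
    and bounded: "\<And>z. \<bar>a z\<bar> \<le> Ka" "\<And>z. \<bar>b z\<bar> \<le> Kb" and diff: "\<And>z. \<bar>a z - b z\<bar> \<le> C"
  shows "\<bar>(LINT z:A|M. G z * a z) - (LINT z:A|M. G z * b z)\<bar> \<le> C * (LINT z:A|M. G z)"
proof -
  have int_a: "set_integrable M A (\<lambda>z. G z * a z)"
    using set_integrable_mult_bounded[OF G _ bounded(1)] by simp
  have int_b: "set_integrable M A (\<lambda>z. G z * b z)"
    using set_integrable_mult_bounded[OF G _ bounded(2)] by simp
  have "\<bar>(LINT z:A|M. G z * a z) - (LINT z:A|M. G z * b z)\<bar> = \<bar>LINT z:A|M. G z * a z - G z * b z\<bar>"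
    using int_a int_b by simp
  also have "\<dots> \<le> (LINT z:A|M. \<bar>G z * a z - G z * b z\<bar>)"
    using set_integral_norm_bound[of M A "\<lambda>z. G z * a z - G z * b z"] int_a int_b by simp
  also have "\<dots> \<le> (LINT z:A|M. C * G z)"
  proof (rule set_integral_mono)
    show "set_integrable M A (\<lambda>z. \<bar>G z * a z - G z * b z\<bar>)"
      using int_a int_b by (intro set_integrable_abs) simp
    show "set_integrable M A (\<lambda>z. C * G z)" using G by simp
    show "\<bar>G z * a z - G z * b z\<bar> \<le> C * G z" for z
      using mult_left_mono[OF diff[of z] G_nonneg[of z]] G_nonneg[of z]
      by (simp add: right_diff_distrib[symmetric] abs_mult mult.commute)
  qed
  finally show ?thesis by simp
qed

lemma abs_TP_cl_minus_TP_le: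
  fixes u :: "real \<Rightarrow> real ^ 'n"
  assumes q: "q \<ge> 2" and \<Lambda>: "\<Lambda> \<ge> 1" "\<And>x. 1 / \<Lambda> \<le> norm (dcurve u x) \<and> norm (dcurve u x) \<le> \<Lambda>"
    and [measurable]: "dcurve u \<in> borel_measurable borel"
    and G: "set_integrable lborel ({0..1} \<times> {0..1}) (tp_kernel q u)"
  shows "\<bar>TP_cl q u - TP q u\<bar>
    \<le> q * \<Lambda> powr (2 * q) * (\<Lambda> - 1) * (LINT z : {0..1} \<times> {0..1} | lborel. tp_kernel q u z)"
proof -
  let ?v = "dcurve u" and ?C = "q\<^sup>2 * \<Lambda> powr (2 * q) * (\<Lambda> - 1)"
  have "\<bar>(LINT z : {0..1} \<times> {0..1} | lborel. tp_kernel q u z * (norm (?v (fst z)) * norm (?v (snd z))))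
      - (LINT z : {0..1} \<times> {0..1} | lborel. tp_kernel q u z * norm (?v (snd z)) powr q)\<bar>
    \<le> ?C * (LINT z : {0..1} \<times> {0..1} | lborel. tp_kernel q u z)"
  proof (rule abs_set_integral_weights_diff_le[OF G])
    show "(\<lambda>z. norm (?v (fst z)) * norm (?v (snd z))) \<in> borel_measurable lborel"
      "(\<lambda>z. norm (?v (snd z)) powr q) \<in> borel_measurable lborel"
      unfolding lborel_prod[symmetric] by measurable
    show "\<bar>norm (?v (fst z)) * norm (?v (snd z))\<bar> \<le> \<Lambda> * \<Lambda>"
      "\<bar>norm (?v (snd z)) powr q\<bar> \<le> \<Lambda> powr q"
      "\<bar>norm (?v (fst z)) * norm (?v (snd z)) - norm (?v (snd z)) powr q\<bar> \<le> ?C" for z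
      using \<Lambda> q by (auto intro: mult_mono powr_mono2 abs_mult_minus_powr_le)
  qed (simp add: tp_kernel_def)
  then show ?thesis
    unfolding TP_cl_eq_set_integral_tp_kernel TP_eq_set_integral_tp_kernel
      right_diff_distrib[symmetric] abs_mult
    using q by (simp add: power2_eq_square field_simps)
qed

context admissible_curve
begin

lemma borel_measurable_derivative [measurable]: "u' \<in> borel_measurable borel"
  using continuous_derivative by (rule borel_measurable_continuous_onI)

lemma borel_measurable_curve [measurable]: "u \<in> borel_measurable borel"
  using continuous_curve by (rule borel_measurable_continuous_onI)

lemma tp_kernel_le:
  assumes q: "q \<ge> 1"
  shows "tp_kernel q u (x, y) \<le> bil u powr (2 * q) * integral {0..1} (diff_quot_powr u' q y (circ_diff x y))"
proof (cases "circ_dist x y = 0")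
  case True
  then have "circ_diff x y = 0" using abs_circ_diff[of x y] by simp
  moreover from this have "u x = u y" using periodic_circ_diff[of u y x, OF periodic] by simp
  ultimately show ?thesis by (simp add: tp_kernel_def diff_quot_powr_def[abs_def])
next
  case False
  let ?d = "circ_dist x y" and ?h = "circ_diff x y" and ?B = "bil u"
  have d: "?d > 0" using False circ_dist_nonneg[of x y] by simp
  note B = chord_ge_circ_dist_div_bil[OF d]
  define g where "g t = norm (u' (y + t * ?h) - u' y)" for t
  have g_cont: "continuous_on {0..1} g"
    unfolding g_def by (rule continuous_on_derivative_increment)
  have g_int: "integral {0..1} g \<ge> 0"
    using integrable_continuous_interval[OF g_cont] by (intro integral_nonneg) (auto simp: g_def)
  have "tp_kernel q u (x, y) \<le> (?d * integral {0..1} g) powr q / (?d / ?B) powr (2 * q)"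
    unfolding tp_kernel_def fst_conv snd_conv
  proof (rule frac_le)
    show "norm (proj_perp (u' y) (u x - u y)) powr q \<le> (?d * integral {0..1} g) powr q"
      using norm_proj_perp_chord_le[of y x] q unfolding g_def by (intro powr_mono2) auto
    show "(?d / ?B) powr (2 * q) \<le> norm (u x - u y) powr (2 * q)"
      using B d q by (intro powr_mono2) auto
  qed (use d B in auto)
  also have "\<dots> = ?B powr (2 * q) * ((integral {0..1} g) powr q / ?d powr q)"
  proof -
    have "(?d * integral {0..1} g) powr q = ?d powr q * (integral {0..1} g) powr q"
      using d g_int by (simp add: powr_mult)
    moreover have "(?d / ?B) powr (2 * q) = ?d powr q * ?d powr q / ?B powr (2 * q)"
      using d B by (simp add: powr_divide powr_add[symmetric])
    ultimately show ?thesis using d B by (simp add: field_simps)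
  qed
  also have "\<dots> \<le> ?B powr (2 * q) * (integral {0..1} (\<lambda>t. g t powr q) / ?d powr q)"
    using powr_integral_le_integral_powr[OF g_cont _ q]
    by (intro mult_left_mono divide_right_mono) (auto simp: g_def)
  also have "integral {0..1} (\<lambda>t. g t powr q) / ?d powr q = integral {0..1} (diff_quot_powr u' q y ?h)"
    unfolding diff_quot_powr_def g_def abs_circ_diff by simp
  finally show ?thesis .
qed

lemma nn_integral_tp_kernel_le:
  assumes q: "q \<ge> 1"
  shows "(\<integral>\<^sup>+z. indicator ({0..1} \<times> {0..1}) z * ennreal (tp_kernel q u z) \<partial>lborel)
    \<le> ennreal (bil u powr (2 * q) / q) *
      (\<integral>\<^sup>+z. indicator ({0..1} \<times> {0..1}) z * ennreal (gag_integrand u' (1 - 1 / q) q z) \<partial>lborel)"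
proof -
  let ?A = "{0..1} \<times> {0..1} :: (real \<times> real) set" and ?B = "bil u powr (2 * q)"
  have "ennreal (tp_kernel q u z) \<le> ennreal ?B * avg_diff_quot_powr u' q (fst z) (snd z)" for z
    using tp_kernel_le[OF q, of "fst z" "snd z"] q
    by (simp add: avg_diff_quot_powr_eq_integral[OF continuous_derivative] ennreal_mult'[symmetric]
        ennreal_leI)
  then have "(\<integral>\<^sup>+z. indicator ?A z * ennreal (tp_kernel q u z) \<partial>lborel)
      \<le> (\<integral>\<^sup>+z. ennreal ?B * (indicator ?A z * avg_diff_quot_powr u' q (fst z) (snd z)) \<partial>lborel)"
    by (intro nn_integral_mono) (simp add: indicator_def)
  also have "\<dots> = ennreal ?B * (\<integral>\<^sup>+z. indicator ?A z * avg_diff_quot_powr u' q (fst z) (snd z) \<partial>lborel)"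
    by (rule nn_integral_cmult) (unfold lborel_prod[symmetric], measurable)
  also have "\<dots> \<le> ennreal ?B * (ennreal (1 / q) *
      (\<integral>\<^sup>+z. indicator ?A z * ennreal (gag_integrand u' (1 - 1 / q) q z) \<partial>lborel))"
    using nn_integral_avg_diff_quot_powr_le_gag[where w = u' and q = q] derivative_periodic q
    by (intro mult_left_mono) auto
  also have "\<dots> = (ennreal ?B * ennreal (1 / q)) *
      (\<integral>\<^sup>+z. indicator ?A z * ennreal (gag_integrand u' (1 - 1 / q) q z) \<partial>lborel)"
    by (simp add: mult.assoc)
  also have "ennreal ?B * ennreal (1 / q) = ennreal (?B / q)"
    by (simp add: ennreal_mult'[symmetric])
  finally show ?thesis .
qed

lemma set_integral_tp_kernel_le:
  assumes q: "q \<ge> 1"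
    and gag: "set_integrable lborel ({0..1} \<times> {0..1}) (gag_integrand u' (1 - 1 / q) q)"
  shows "set_integrable lborel ({0..1} \<times> {0..1}) (tp_kernel q u)"
    and "(LINT z : {0..1} \<times> {0..1} | lborel. tp_kernel q u z)
      \<le> bil u powr (2 * q) / q * gag_seminorm u' (1 - 1 / q) q powr q"
proof -
  have "tp_kernel q u \<in> borel_measurable (lborel \<Otimes>\<^sub>M lborel)"
    unfolding tp_kernel_def proj_perp_def by measurable
  then have meas: "tp_kernel q u \<in> borel_measurable lborel"
    by (simp add: lborel_prod)
  have "({0..1} \<times> {0..1} :: (real \<times> real) set) \<in> sets lborel"
    by (simp add: borel_closed closed_Times)
  note le = set_integrable_nn_integral_le[OF meas this gag _ _ _ nn_integral_tp_kernel_le[OF q]]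
  show "set_integrable lborel ({0..1} \<times> {0..1}) (tp_kernel q u)"
    using q by (intro le(1)) (auto simp: tp_kernel_def gag_integrand_def)
  show "(LINT z : {0..1} \<times> {0..1} | lborel. tp_kernel q u z)
      \<le> bil u powr (2 * q) / q * gag_seminorm u' (1 - 1 / q) q powr q"
  proof -
    have "(LINT z : {0..1} \<times> {0..1} | lborel. tp_kernel q u z)
        \<le> bil u powr (2 * q) / q * (LINT z : {0..1} \<times> {0..1} | lborel. gag_integrand u' (1 - 1 / q) q z)"
      by (rule le(2)) (use q in \<open>auto simp: tp_kernel_def gag_integrand_def\<close>)
    then show ?thesis using gag_seminorm_powr[of q u' "1 - 1 / q"] q by simp
  qed
qed

end

theorem proposition3p4:
  fixes u :: "real \<Rightarrow> real ^ 'n" and q \<Lambda> :: real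
  assumes "q > 2" and "CARD('n) \<ge> 2" and "admissible q u" and "\<Lambda> \<ge> 1"
    and "\<And>x. 1 / \<Lambda> \<le> norm (dcurve u x) \<and> norm (dcurve u x) \<le> \<Lambda>"
  shows "\<bar>TP_cl q u - TP q u\<bar>
    \<le> bil u powr (2 * q) * \<Lambda> powr (2 * q) * gag_seminorm (dcurve u) (1 - 1 / q) q powr q * (\<Lambda> - 1)"
proof -
  from \<open>admissible q u\<close> obtain c where "admissible_curve u c"
    and gag: "set_integrable lborel ({0..1} \<times> {0..1}) (gag_integrand (dcurve u) (1 - 1 / q) q)"
    unfolding admissible_def W2q_def admissible_curve_def periodic_C1_curve_def
      admissible_curve_axioms_def by blast
  then interpret admissible_curve u c by simp
  have "\<bar>TP_cl q u - TP q u\<bar>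
      \<le> q * \<Lambda> powr (2 * q) * (\<Lambda> - 1) * (LINT z : {0..1} \<times> {0..1} | lborel. tp_kernel q u z)"
    using assms(1,4,5) set_integral_tp_kernel_le(1)[OF _ gag]
    by (intro abs_TP_cl_minus_TP_le) auto
  also have "\<dots> \<le> q * \<Lambda> powr (2 * q) * (\<Lambda> - 1) *
      (bil u powr (2 * q) / q * gag_seminorm u' (1 - 1 / q) q powr q)"
    using set_integral_tp_kernel_le(2)[OF _ gag] assms(1,4) by (intro mult_left_mono) auto
  also have "\<dots> = bil u powr (2 * q) * \<Lambda> powr (2 * q) * gag_seminorm u' (1 - 1 / q) q powr q * (\<Lambda> - 1)"
    using assms(1) by simp
  finally show ?thesis .
qed

end
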